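(* Let $E$ be a Dedekind complete Riesz space with conditional expectation operator $T$ and let $e$ be a weak order unit of $E$ with $Te=e$. If $(f_\alpha)_{\alpha\in\Lambda}$ is a $T$-uniform family in $E$, then the set $\{T|f_\alpha| : \alpha\in\Lambda\}$ is order bounded in $E$.
   Context: A conditional expectation operator on a Dedekind complete Riesz space $E$ with a weak order unit is a positive, order continuous linear projection $T:E\to E$ which maps weak order units to weak order units and whose range $\mathcal{R}(T)$ is a Dedekind complete Riesz subspace of $E$. For $u\in E$, $P_u$ denotes the band projection onto the band generated by $u$. A family $(f_\alpha)_{\alpha\in\Lambda}$ in $E$ is called $T$-uniform if $\sup\{T P_{(|f_\alpha|-ce)^+}|f_\alpha| : \alpha\in\Lambda\}$ (exists for all sufficiently large $c$ and) order converges to $0$ as $c\to\infty$. *)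

theory Defs
  imports Complex_Main
begin

text \<open>A Dedekind complete Riesz space: a lattice-ordered real vector space
(ordered_real_vector + lattice = Riesz space) in which every nonempty
subset that is bounded above has a supremum (conditionally complete lattice).\<close>
class dc_riesz_space = ordered_real_vector + conditionally_complete_lattice

definition rabs :: "'a::dc_riesz_space \<Rightarrow> 'a" where
  "rabs x = sup x (- x)"

definition rpos :: "'a::dc_riesz_space \<Rightarrow> 'a" where
  "rpos x = sup x 0"

definition rdisjoint :: "'a::dc_riesz_space \<Rightarrow> 'a \<Rightarrow> bool" where
  "rdisjoint x y \<longleftrightarrow> inf (rabs x) (rabs y) = 0"

text \<open>Band generated by u: the double disjoint complement of {u}
(which is the band generated by u in an Archimedean, in particular in a
Dedekind complete, Riesz space).\<close>
definition band_gen :: "'a::dc_riesz_space \<Rightarrow> 'a set" where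
  "band_gen u = {x. \<forall>y. rdisjoint y u \<longrightarrow> rdisjoint x y}"

text \<open>Band projection onto the band generated by u: P_u x is the component of x in
band_gen u in the decomposition E = B \<oplus> B^d.\<close>
definition band_proj :: "'a::dc_riesz_space \<Rightarrow> 'a \<Rightarrow> 'a" where
  "band_proj u x = (THE p. p \<in> band_gen u \<and> (\<forall>b\<in>band_gen u. rdisjoint (x - p) b))"

definition weak_order_unit :: "'a::dc_riesz_space \<Rightarrow> bool" where
  "weak_order_unit e \<longleftrightarrow> 0 \<le> e \<and> band_gen e = UNIV"

definition is_inf_of :: "'a::order set \<Rightarrow> 'a \<Rightarrow> bool" where
  "is_inf_of D l \<longleftrightarrow> (\<forall>x\<in>D. l \<le> x) \<and> (\<forall>y. (\<forall>x\<in>D. y \<le> x) \<longrightarrow> y \<le> l)"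

definition is_sup_of :: "'a::order set \<Rightarrow> 'a \<Rightarrow> bool" where
  "is_sup_of D s \<longleftrightarrow> (\<forall>x\<in>D. x \<le> s) \<and> (\<forall>y. (\<forall>x\<in>D. x \<le> y) \<longrightarrow> s \<le> y)"

definition down_directed :: "'a::order set \<Rightarrow> bool" where
  "down_directed D \<longleftrightarrow> D \<noteq> {} \<and> (\<forall>a\<in>D. \<forall>b\<in>D. \<exists>c\<in>D. c \<le> a \<and> c \<le> b)"

definition order_continuous :: "('a::dc_riesz_space \<Rightarrow> 'a) \<Rightarrow> bool" where
  "order_continuous T \<longleftrightarrow>
     (\<forall>D. down_directed D \<and> is_inf_of D 0 \<longrightarrow> is_inf_of (T ` D) 0)"

definition positive_op :: "('a::dc_riesz_space \<Rightarrow> 'a) \<Rightarrow> bool" where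
  "positive_op T \<longleftrightarrow> (\<forall>x. 0 \<le> x \<longrightarrow> 0 \<le> T x)"

definition riesz_subspace :: "'a::dc_riesz_space set \<Rightarrow> bool" where
  "riesz_subspace F \<longleftrightarrow> 0 \<in> F \<and> (\<forall>x\<in>F. \<forall>y\<in>F. x + y \<in> F) \<and>
     (\<forall>x\<in>F. \<forall>a::real. a *\<^sub>R x \<in> F) \<and> (\<forall>x\<in>F. \<forall>y\<in>F. sup x y \<in> F \<and> inf x y \<in> F)"

definition dedekind_complete_in :: "'a::order set \<Rightarrow> bool" where
  "dedekind_complete_in F \<longleftrightarrow>
     (\<forall>A\<subseteq>F. A \<noteq> {} \<and> (\<exists>b\<in>F. \<forall>x\<in>A. x \<le> b) \<longrightarrow>
        (\<exists>s\<in>F. (\<forall>x\<in>A. x \<le> s) \<and> (\<forall>y\<in>F. (\<forall>x\<in>A. x \<le> y) \<longrightarrow> s \<le> y)))"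

definition cond_exp_op :: "('a::dc_riesz_space \<Rightarrow> 'a) \<Rightarrow> bool" where
  "cond_exp_op T \<longleftrightarrow>
     positive_op T \<and> order_continuous T \<and> linear T \<and> (\<forall>x. T (T x) = T x) \<and>
     (\<forall>w. weak_order_unit w \<longrightarrow> weak_order_unit (T w)) \<and>
     riesz_subspace (range T) \<and> dedekind_complete_in (range T)"

definition order_conv_at_top :: "(real \<Rightarrow> 'a::dc_riesz_space) \<Rightarrow> 'a \<Rightarrow> bool" where
  "order_conv_at_top x l \<longleftrightarrow>
     (\<exists>p c0. (\<forall>c c'. c0 \<le> c \<longrightarrow> c \<le> c' \<longrightarrow> p c' \<le> p c) \<and> is_inf_of (p ` {c0..}) 0 \<and>
            (\<forall>c\<ge>c0. rabs (x c - l) \<le> p c))"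

definition T_uniform ::
  "('a::dc_riesz_space \<Rightarrow> 'a) \<Rightarrow> 'a \<Rightarrow> ('i \<Rightarrow> 'a) \<Rightarrow> 'i set \<Rightarrow> bool" where
  "T_uniform T e f \<Lambda> \<longleftrightarrow>
     (\<exists>g c0. (\<forall>c\<ge>c0. is_sup_of
                 {T (band_proj (rpos (rabs (f \<alpha>) - c *\<^sub>R e)) (rabs (f \<alpha>))) | \<alpha>. \<alpha> \<in> \<Lambda>} (g c))
            \<and> order_conv_at_top g 0)"

definition order_bounded :: "'a::order set \<Rightarrow> bool" where
  "order_bounded A \<longleftrightarrow> (\<exists>a b. \<forall>x\<in>A. a \<le> x \<and> x \<le> b)"

end

theory Submission imports Defs "HOL-Library.Lattice_Algebras" begin

text \<open>Split |f_\<alpha>| along the band generated by u = (|f_\<alpha>| - c e)^+.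
The band component is bounded after applying T by the supremum g c from T-uniformity,
while the component disjoint from u lies below c e, so its image under T lies below
T (c e) = c e. Hence every T |f_\<alpha>| lies in the order interval [0, g c + c e].
The band projection of the definitions is realised, for positive x and u, as the
supremum of the increasing sequence x \<sqinter> n u.\<close>

instance dc_riesz_space \<subseteq> lattice_ab_group_add ..

lemma rabs_nonneg: "0 \<le> rabs (x::'a::dc_riesz_space)"
proof -
  have "x + (-x) \<le> rabs x + rabs x" unfolding rabs_def by (intro add_mono) auto
  then show ?thesis by simp
qed

lemma rabs_of_nonneg: "0 \<le> (x::'a::dc_riesz_space) \<Longrightarrow> rabs x = x"
  unfolding rabs_def by (simp add: sup_absorb1 order_trans[of "-x" 0 x])

lemma rabs_eq_0_imp: "rabs (x::'a::dc_riesz_space) = 0 \<Longrightarrow> x = 0"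
  unfolding rabs_def by simp

lemma rabs_diff_le: "rabs ((a::'a::dc_riesz_space) - b) \<le> rabs a + rabs b"
proof -
  have a: "a \<le> rabs a" "- a \<le> rabs a" and b: "b \<le> rabs b" "- b \<le> rabs b"
    by (simp_all add: rabs_def)
  have "a - b \<le> rabs a + rabs b" using add_mono[OF a(1) b(2)] by simp
  moreover have "- (a - b) \<le> rabs a + rabs b" using add_mono[OF a(2) b(1)] by simp
  ultimately show ?thesis by (simp add: rabs_def)
qed

lemma inf_add_le_add_inf:
  fixes z s t :: "'a::dc_riesz_space"
  assumes "0 \<le> z" "0 \<le> s" "0 \<le> t"
  shows "inf z (s + t) \<le> inf z s + inf z t"
proof -
  have "inf z s + inf z t = inf (inf z s + z) (inf z s + t)" by (rule add_inf_distrib_left)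
  moreover have "inf z (s + t) \<le> inf z s + z" using assms by (simp add: add_increasing le_infI1)
  moreover have "inf z (s + t) \<le> inf (z + t) (s + t)"
    using assms by (auto intro: le_infI1 add_increasing2)
  moreover have "inf (z + t) (s + t) = inf z s + t" by (simp add: add_inf_distrib_right)
  ultimately show ?thesis by simp
qed

lemma inf_le_inf_add_diff:
  fixes z a p :: "'a::dc_riesz_space"
  assumes "a \<le> p"
  shows "inf z p \<le> inf z a + (p - a)"
proof -
  have "inf z a + (p - a) = inf (z + (p - a)) p" by (simp add: add_inf_distrib_right)
  moreover have "inf z p \<le> inf (z + (p - a)) p"
    using assms by (auto intro: le_infI1 simp: le_add_same_cancel1)
  ultimately show ?thesis by simp
qed

lemma nonneg_eq_0_if_multiples_bounded:
  fixes w x :: "'a::dc_riesz_space"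
  assumes "0 \<le> w" "\<And>n. real n *\<^sub>R w \<le> x"
  shows "w = 0"
proof -
  let ?S = "range (\<lambda>n. real n *\<^sub>R w)"
  have bdd: "bdd_above ?S" by (rule bdd_aboveI[of _ x]) (use assms(2) in auto)
  have "Sup ?S \<le> Sup ?S - w"
  proof (rule cSup_least)
    fix y assume "y \<in> ?S"
    then obtain n where y: "y = real n *\<^sub>R w" by auto
    have "real (Suc n) *\<^sub>R w \<le> Sup ?S" by (rule cSup_upper[OF rangeI bdd])
    then show "y \<le> Sup ?S - w" by (simp add: y scaleR_left_distrib algebra_simps)
  qed auto
  then show ?thesis using assms(1) by (simp add: le_diff_eq)
qed

lemma rdisjoint_commute: "rdisjoint a b = rdisjoint b a"
  by (simp add: rdisjoint_def inf_commute)

lemma rdisjoint_self_imp: "rdisjoint a a \<Longrightarrow> a = 0"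
  by (simp add: rdisjoint_def rabs_eq_0_imp)

lemma rdisjoint_diff:
  fixes a b y :: "'a::dc_riesz_space"
  assumes "rdisjoint a y" "rdisjoint b y"
  shows "rdisjoint (a - b) y"
proof -
  have "inf (rabs (a - b)) (rabs y) \<le> inf (rabs y) (rabs a + rabs b)"
    using rabs_diff_le[of a b] by (simp add: inf_commute le_infI2)
  also have "\<dots> \<le> inf (rabs y) (rabs a) + inf (rabs y) (rabs b)"
    by (rule inf_add_le_add_inf) (auto simp: rabs_nonneg)
  also have "\<dots> = 0" using assms by (simp add: rdisjoint_def inf_commute)
  finally show ?thesis unfolding rdisjoint_def
    by (meson antisym le_infI rabs_nonneg)
qed

lemma inf_rabs_multiple_eq_0:
  fixes y u :: "'a::dc_riesz_space"
  assumes "rdisjoint y u" "0 \<le> u"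
  shows "inf (rabs y) (real n *\<^sub>R u) = 0"
proof (induction n)
  case 0
  then show ?case using rabs_nonneg[of y] by (simp add: inf_absorb2)
next
  case (Suc n)
  have yu: "inf (rabs y) u = 0" using assms by (simp add: rdisjoint_def rabs_of_nonneg)
  have "inf (rabs y) (real (Suc n) *\<^sub>R u) = inf (rabs y) (real n *\<^sub>R u + u)"
    by (simp add: scaleR_left_distrib algebra_simps)
  also have "\<dots> \<le> inf (rabs y) (real n *\<^sub>R u) + inf (rabs y) u"
    by (rule inf_add_le_add_inf) (auto simp: rabs_nonneg assms(2) scaleR_nonneg_nonneg)
  finally have "inf (rabs y) (real (Suc n) *\<^sub>R u) \<le> 0" using Suc yu by simp
  moreover have "0 \<le> inf (rabs y) (real (Suc n) *\<^sub>R u)"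
    using rabs_nonneg[of y] assms(2) by (simp add: scaleR_nonneg_nonneg)
  ultimately show ?case by (rule antisym)
qed

definition band_component :: "'a::dc_riesz_space \<Rightarrow> 'a \<Rightarrow> 'a" where
  "band_component u x = Sup (range (\<lambda>n. inf x (real n *\<^sub>R u)))"

lemma band_component_bounds:
  fixes x u :: "'a::dc_riesz_space"
  assumes "0 \<le> x" "0 \<le> u"
  shows "inf x (real n *\<^sub>R u) \<le> band_component u x"
    and "0 \<le> band_component u x" and "band_component u x \<le> x"
proof -
  have bdd: "bdd_above (range (\<lambda>n. inf x (real n *\<^sub>R u)))" by (auto intro!: bdd_aboveI[of _ x])
  show upper: "inf x (real m *\<^sub>R u) \<le> band_component u x" for m
    unfolding band_component_def by (rule cSup_upper[OF _ bdd]) auto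
  show "0 \<le> band_component u x" using upper[of 0] assms(1) by (simp add: inf_absorb2)
  show "band_component u x \<le> x" unfolding band_component_def by (rule cSup_least) auto
qed

lemma band_component_in_band_gen:
  fixes x u :: "'a::dc_riesz_space"
  assumes x0: "0 \<le> x" and u0: "0 \<le> u"
  shows "band_component u x \<in> band_gen u"
  unfolding band_gen_def
proof (intro CollectI allI impI)
  fix y assume yu: "rdisjoint y u"
  define p where "p = band_component u x"
  note bounds = band_component_bounds[OF assms, folded p_def]
  define w where "w = inf (rabs y) p"
  have "p \<le> p - w"
    unfolding p_def band_component_def
  proof (rule cSup_least)
    fix a assume "a \<in> range (\<lambda>n. inf x (real n *\<^sub>R u))"
    then obtain n where a: "a = inf x (real n *\<^sub>R u)" by auto
    have "inf (rabs y) a \<le> inf (rabs y) (real n *\<^sub>R u)" by (auto simp: a intro: le_infI2)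
    moreover have "0 \<le> inf (rabs y) a"
      using rabs_nonneg[of y] x0 u0 by (simp add: a scaleR_nonneg_nonneg)
    ultimately have "inf (rabs y) a = 0"
      using inf_rabs_multiple_eq_0[OF yu u0, of n] by (simp add: antisym)
    moreover have "w \<le> inf (rabs y) a + (p - a)"
      unfolding w_def using bounds(1) a by (intro inf_le_inf_add_diff) auto
    ultimately show "a \<le> Sup (range (\<lambda>n. inf x (real n *\<^sub>R u))) - w"
      by (simp add: p_def band_component_def le_diff_eq algebra_simps)
  qed auto
  then have "w \<le> 0" by (simp add: le_diff_eq)
  then have "w = 0" using rabs_nonneg[of y] bounds(2) by (simp add: w_def antisym)
  then show "rdisjoint (band_component u x) y"
    unfolding p_def[symmetric]
    by (simp add: rdisjoint_def rabs_of_nonneg[OF bounds(2)] w_def inf_commute)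
qed

text \<open>The meet w of x - band_component u x with u satisfies n w \<le> x \<sqinter> n u \<le> x for all n.\<close>
lemma rdisjoint_diff_band_component:
  fixes x u :: "'a::dc_riesz_space"
  assumes x0: "0 \<le> x" and u0: "0 \<le> u"
  shows "rdisjoint (x - band_component u x) u"
proof -
  define p where "p = band_component u x"
  note bounds = band_component_bounds[OF assms, folded p_def]
  define w where "w = inf (x - p) u"
  have multiple: "real n *\<^sub>R w \<le> inf x (real n *\<^sub>R u)" for n
  proof (induction n)
    case (Suc n)
    have "real (Suc n) *\<^sub>R w \<le> inf x (real n *\<^sub>R u) + w"
      using Suc by (simp add: scaleR_left_distrib algebra_simps)
    also have "\<dots> \<le> inf x (real (Suc n) *\<^sub>R u)"
    proof -
      have "inf x (real n *\<^sub>R u) + w \<le> p + (x - p)"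
        using bounds(1) by (intro add_mono) (auto simp: w_def)
      moreover have "inf x (real n *\<^sub>R u) + w \<le> real n *\<^sub>R u + u"
        by (intro add_mono) (auto simp: w_def)
      ultimately show ?thesis by (simp add: scaleR_left_distrib algebra_simps)
    qed
    finally show ?case .
  qed (simp add: x0)
  have "w = 0"
    using bounds(3) u0 multiple
    by (intro nonneg_eq_0_if_multiples_bounded[of w x]) (auto simp: w_def intro: order_trans)
  then show ?thesis
    using bounds(3) by (simp add: rdisjoint_def rabs_of_nonneg u0 w_def p_def)
qed

lemma band_proj_unique:
  fixes x p q u :: "'a::dc_riesz_space"
  assumes "p \<in> band_gen u" "\<forall>b\<in>band_gen u. rdisjoint (x - p) b"
    and "q \<in> band_gen u" "\<forall>b\<in>band_gen u. rdisjoint (x - q) b"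
  shows "p = q"
proof -
  have "p - q \<in> band_gen u" using assms(1,3) unfolding band_gen_def
    by (auto intro: rdisjoint_diff)
  then have "rdisjoint ((x - q) - (x - p)) (p - q)"
    using assms(2,4) by (blast intro: rdisjoint_diff)
  then have "rdisjoint (p - q) (p - q)" by (simp add: algebra_simps)
  then show ?thesis using rdisjoint_self_imp by force
qed

lemma band_proj_eq_band_component:
  fixes x u :: "'a::dc_riesz_space"
  assumes "0 \<le> x" "0 \<le> u"
  shows "band_proj u x = band_component u x"
proof -
  have "\<forall>b\<in>band_gen u. rdisjoint (x - band_component u x) b"
    using rdisjoint_diff_band_component[OF assms] by (auto simp: band_gen_def rdisjoint_commute)
  then show ?thesis
    unfolding band_proj_def using band_component_in_band_gen[OF assms] band_proj_unique
    by (intro the_equality) blast+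
qed

text \<open>With u = (x - a)^+, the component of x disjoint from u is a positive
element below x whose excess over a lies below u, hence is disjoint from itself.\<close>
lemma diff_band_proj_pos_part_le:
  fixes x a :: "'a::dc_riesz_space"
  assumes x0: "0 \<le> x" and a0: "0 \<le> a"
  shows "x - band_proj (rpos (x - a)) x \<le> a"
proof -
  define u where "u = rpos (x - a)"
  define q where "q = x - band_proj u x"
  have u0: "0 \<le> u" by (simp add: u_def rpos_def)
  note bounds = band_component_bounds[OF x0 u0, folded band_proj_eq_band_component[OF x0 u0]]
  have q0: "0 \<le> q" and qx: "q \<le> x" using bounds by (auto simp: q_def)
  have qu: "rdisjoint q u"
    using rdisjoint_diff_band_component[OF x0 u0] band_proj_eq_band_component[OF x0 u0]
    by (simp add: q_def)
  define v where "v = rpos (q - a)"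
  have "v \<le> u" unfolding v_def u_def rpos_def using qx by (auto intro: le_supI1 diff_right_mono)
  moreover have "v \<le> q" unfolding v_def rpos_def using q0 a0 by auto
  ultimately have "v \<le> inf (rabs q) (rabs u)" by (simp add: rabs_of_nonneg q0 u0)
  then have "v \<le> 0" using qu unfolding rdisjoint_def by simp
  then show ?thesis by (simp add: v_def rpos_def q_def u_def)
qed

theorem lemma2p7:
  fixes T :: "'a::dc_riesz_space \<Rightarrow> 'a" and e :: 'a
    and f :: "'i \<Rightarrow> 'a" and \<Lambda> :: "'i set"
  assumes "cond_exp_op T"
    and "weak_order_unit e" and "T e = e"
    and "T_uniform T e f \<Lambda>"
  shows "order_bounded {T (rabs (f \<alpha>)) | \<alpha>. \<alpha> \<in> \<Lambda>}"
proof -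
  have pos: "\<And>x. 0 \<le> x \<Longrightarrow> 0 \<le> T x" and lin: "linear T"
    using assms(1) by (auto simp: cond_exp_op_def positive_op_def)
  obtain g c0 where g: "\<forall>c\<ge>c0. is_sup_of
      {T (band_proj (rpos (rabs (f \<alpha>) - c *\<^sub>R e)) (rabs (f \<alpha>))) | \<alpha>. \<alpha> \<in> \<Lambda>} (g c)"
    using assms(4) unfolding T_uniform_def by blast
  define c where "c = max c0 0"
  have ce0: "0 \<le> c *\<^sub>R e"
    using assms(2) by (intro scaleR_nonneg_nonneg) (auto simp: c_def weak_order_unit_def)
  have "T (rabs (f \<alpha>)) \<le> g c + c *\<^sub>R e" if "\<alpha> \<in> \<Lambda>" for \<alpha>
  proof -
    define x where "x = rabs (f \<alpha>)"
    define p where "p = band_proj (rpos (x - c *\<^sub>R e)) x"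
    have "is_sup_of {T (band_proj (rpos (rabs (f \<alpha>) - c *\<^sub>R e)) (rabs (f \<alpha>))) | \<alpha>. \<alpha> \<in> \<Lambda>} (g c)"
      using g by (simp add: c_def)
    then have "T p \<le> g c" using that unfolding is_sup_of_def p_def x_def by blast
    moreover have "T (x - p) \<le> c *\<^sub>R e"
      using pos[of "c *\<^sub>R e - (x - p)"] diff_band_proj_pos_part_le[OF rabs_nonneg ce0, of "f \<alpha>"]
      by (simp add: assms(3) p_def x_def linear_diff[OF lin] linear_scale[OF lin])
    moreover have "T x = T p + T (x - p)" by (simp add: linear_diff[OF lin])
    ultimately show ?thesis by (simp add: x_def add_mono)
  qed
  then show ?thesis unfolding order_bounded_def using pos[OF rabs_nonneg] by blast
qed

end
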